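(* Let $A,B\in\mathbb{C}^{n\times n}$. The following are equivalent: (i) $A\leq^{GD1}B$; (ii) $A =AA^-B=BA^{GD}A$ for some $A^- \in A\{1\}$ and some $A^{GD} \in A\{GD\}$; (iii) $A = AA^{GD1}B=BA^{GD1}A$ for some GD1 inverse $A^{GD1}$ of $A$; (iv) for some $A^- \in A\{1\}$ and some $A^{GD} \in A\{GD\}$ there exist idempotents $P,Q\in\mathbb{C}^{n\times n}$ such that $R(P)=R(A)$, $N(P)=N(AA^-)$, $R(Q)=R(A^{GD}A)$, $N(Q)=N(A)$ and $A=PB=BQ$; (v) for some GD1 inverse $A^{GD1}$ of $A$ there exist idempotents $P,Q\in\mathbb{C}^{n\times n}$ such that $R(P)=R(A)$, $N(P)=N(A^{GD1})$, $R(Q)=R(A^{GD1})$, $N(Q)=N(A)$ and $A=PB=BQ$.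
   Context: For $A\in\mathbb{C}^{n\times n}$, $ind(A)$ is the smallest nonnegative integer $k$ with $\mathrm{rank}(A^k)=\mathrm{rank}(A^{k+1})$. $A\{1\}$ is the set of matrices $X$ with $AXA=A$. With $k=ind(A)$, $A\{GD\}$ is the set of matrices $X$ with $AXA=A$, $XA^{k+1}=A^k$, $A^{k+1}X=A^k$ (G-Drazin inverses). A GD1 inverse of $A$ is a matrix $A^{GD1}=A^{GD}AA^-$ with $A^-\in A\{1\}$, $A^{GD}\in A\{GD\}$. We write $A\leq^{GD1}B$ if $AA^{GD1}=BA^{GD1}$ and $A^{GD1}A=A^{GD1}B$ for some GD1 inverse $A^{GD1}$ of $A$. $R(\cdot)$, $N(\cdot)$ denote range and null space. *)

theory Defs
  imports "HOL-Analysis.Analysis"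
begin

definition matpow :: "complex^'n^'n \<Rightarrow> nat \<Rightarrow> complex^'n^'n" where
  "matpow A k = ((\<lambda>X. X ** A) ^^ k) (mat 1)"

definition ind :: "complex^'n^'n \<Rightarrow> nat" where
  "ind A = (LEAST k. rank (matpow A k) = rank (matpow A (Suc k)))"

definition inv1 :: "complex^'n^'n \<Rightarrow> (complex^'n^'n) set" where
  "inv1 A = {X. A ** X ** A = A}"

definition GDinv :: "complex^'n^'n \<Rightarrow> (complex^'n^'n) set" where
  "GDinv A = {X. A ** X ** A = A \<and> X ** matpow A (Suc (ind A)) = matpow A (ind A)
                \<and> matpow A (Suc (ind A)) ** X = matpow A (ind A)}"

definition GD1inv :: "complex^'n^'n \<Rightarrow> (complex^'n^'n) set" where
  "GD1inv A = {G ** A ** M | G M. G \<in> GDinv A \<and> M \<in> inv1 A}"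

definition gd1_le :: "complex^'n^'n \<Rightarrow> complex^'n^'n \<Rightarrow> bool" where
  "gd1_le A B \<longleftrightarrow> (\<exists>X \<in> GD1inv A. A ** X = B ** X \<and> X ** A = X ** B)"

definition idempotent_mat :: "complex^'n^'n \<Rightarrow> bool" where
  "idempotent_mat P \<longleftrightarrow> P ** P = P"

definition mrange :: "complex^'n^'n \<Rightarrow> (complex^'n) set" where
  "mrange A = range (\<lambda>x. A *v x)"

definition mnull :: "complex^'n^'n \<Rightarrow> (complex^'n) set" where
  "mnull A = {x. A *v x = 0}"

end

theory Submission
  imports Defs
begin

text \<open>Only the inner-inverse property \<open>A A\<^sup>- A = A\<close> of the two generalized inverses matters.
  For inner inverses \<open>M\<close> and \<open>G\<close> of \<open>A\<close> and \<open>X = G A M\<close> one has \<open>A X = A M\<close> and \<open>X A = G A\<close>;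
  both are idempotents, with \<open>R(A M) = R(A)\<close>, \<open>N(G A) = N(A)\<close>, \<open>N(X) = N(A M)\<close> and
  \<open>R(X) = R(G A)\<close>. An idempotent is determined by its range and null space, so the
  idempotents \<open>P\<close>, \<open>Q\<close> in (iv) and (v) are forced to be \<open>A M\<close> and \<open>G A\<close>, and every
  condition collapses to \<open>A = A M B = B G A\<close>.\<close>

lemma GDinv_subset_inv1: "GDinv A \<subseteq> inv1 A"
  by (auto simp: GDinv_def inv1_def)

lemma bex_GD1inv_iff:
  "(\<exists>X \<in> GD1inv A. P X) \<longleftrightarrow> (\<exists>M \<in> inv1 A. \<exists>G \<in> GDinv A. P (G ** A ** M))"
  by (auto simp: GD1inv_def)

lemma inner_inverse_idempotent_left:
  fixes A :: "'a::semiring_1^'n^'m" and M :: "'a^'m^'n"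
  assumes "A ** M ** A = A"
  shows "(A ** M) ** (A ** M) = A ** M"
  by (metis assms matrix_mul_assoc)

lemma inner_inverse_idempotent_right:
  fixes A :: "'a::semiring_1^'n^'m" and G :: "'a^'m^'n"
  assumes "A ** G ** A = A"
  shows "(G ** A) ** (G ** A) = G ** A"
  by (metis assms matrix_mul_assoc)

lemma inner_inverses_mult_left:
  fixes A :: "'a::semiring_1^'n^'m" and G M :: "'a^'m^'n"
  assumes "A ** G ** A = A"
  shows "A ** (G ** A ** M) = A ** M"
  by (metis assms matrix_mul_assoc)

lemma inner_inverses_mult_right:
  fixes A :: "'a::semiring_1^'n^'m" and G M :: "'a^'m^'n"
  assumes "A ** M ** A = A"
  shows "(G ** A ** M) ** A = G ** A"
  by (metis assms matrix_mul_assoc)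

lemma inner_inverses_commute_iff:
  fixes A B :: "'a::semiring_1^'n^'m" and G M :: "'a^'m^'n"
  assumes G: "A ** G ** A = A" and M: "A ** M ** A = A"
  defines "X \<equiv> G ** A ** M"
  shows "(A ** X = B ** X \<and> X ** A = X ** B) \<longleftrightarrow> (A = A ** M ** B \<and> A = B ** G ** A)"
proof
  have AX: "A ** X = A ** M" and XA: "X ** A = G ** A"
    unfolding X_def by (fact inner_inverses_mult_left[OF G] inner_inverses_mult_right[OF M])+
  assume "A ** X = B ** X \<and> X ** A = X ** B"
  then have "A ** M = B ** X" "G ** A = X ** B"
    using AX XA by simp_all
  then have "A ** M ** A = B ** (X ** A)" "A ** (G ** A) = A ** (X ** B)"
    by (simp_all add: matrix_mul_assoc)
  then show "A = A ** M ** B \<and> A = B ** G ** A"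
    using AX XA G M by (simp add: matrix_mul_assoc)
next
  assume "A = A ** M ** B \<and> A = B ** G ** A"
  then show "A ** X = B ** X \<and> X ** A = X ** B"
    unfolding X_def using G M by (metis matrix_mul_assoc)
qed

lemma inner_inverses_sandwich_iff:
  fixes A B :: "'a::semiring_1^'n^'m" and G M :: "'a^'m^'n"
  assumes G: "A ** G ** A = A" and M: "A ** M ** A = A"
  defines "X \<equiv> G ** A ** M"
  shows "(A = A ** X ** B \<and> A = B ** X ** A) \<longleftrightarrow> (A = A ** M ** B \<and> A = B ** G ** A)"
  unfolding X_def
  using inner_inverses_mult_left[OF G] inner_inverses_mult_right[OF M] by (metis matrix_mul_assoc)

lemma mrange_mult_inner_inverse:
  fixes A M :: "complex^'n^'n"
  assumes "A ** M ** A = A"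
  shows "mrange (A ** M) = mrange A"
proof
  show "mrange (A ** M) \<subseteq> mrange A"
    by (auto simp: mrange_def simp flip: matrix_vector_mul_assoc)
  have "A *v x = (A ** M) *v (A *v x)" for x
    using assms by (simp add: matrix_vector_mul_assoc)
  then show "mrange A \<subseteq> mrange (A ** M)"
    unfolding mrange_def by blast
qed

lemma mnull_inner_inverse_mult:
  fixes A G :: "complex^'n^'n"
  assumes "A ** G ** A = A"
  shows "mnull (G ** A) = mnull A"
proof
  show "mnull A \<subseteq> mnull (G ** A)"
    by (auto simp: mnull_def simp flip: matrix_vector_mul_assoc)
  have "A *v x = A *v ((G ** A) *v x)" for x
    using assms by (simp add: matrix_vector_mul_assoc matrix_mul_assoc)
  then show "mnull (G ** A) \<subseteq> mnull A"
    unfolding mnull_def by (metis (mono_tags) matrix_vector_mult_0_right mem_Collect_eq subsetI)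
qed

lemma mnull_mult_left_cancel:
  fixes A G M :: "complex^'n^'n"
  assumes "mnull (G ** A) = mnull A"
  shows "mnull (G ** A ** M) = mnull (A ** M)"
  using assms by (auto simp: mnull_def set_eq_iff simp flip: matrix_vector_mul_assoc)

lemma mrange_mult_right_cancel:
  fixes A G M :: "complex^'n^'n"
  assumes "mrange (A ** M) = mrange A"
  shows "mrange (G ** A ** M) = mrange (G ** A)"
proof -
  have "mrange (G ** C) = (\<lambda>v. G *v v) ` mrange C" for C
    by (auto simp: mrange_def image_comp matrix_vector_mul_assoc)
  then show ?thesis
    using assms by (metis matrix_mul_assoc)
qed

lemma idempotent_mat_eqI:
  fixes P E :: "complex^'n^'n"
  assumes P: "idempotent_mat P" and E: "idempotent_mat E"
    and range: "mrange P = mrange E" and null: "mnull P = mnull E"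
  shows "P = E"
proof -
  have "P *v x = E *v x" for x
  proof -
    obtain y where y: "P *v x = E *v y"
      using range by (auto simp: mrange_def)
    have EP: "E *v (P *v x) = P *v x"
      using E y by (simp add: idempotent_mat_def matrix_vector_mul_assoc)
    have "P *v (x - P *v x) = 0"
      using P by (simp add: idempotent_mat_def matrix_vector_mult_diff_distrib matrix_vector_mul_assoc)
    then have "E *v (x - P *v x) = 0"
      using null by (auto simp: mnull_def)
    then show ?thesis
      using EP by (simp add: matrix_vector_mult_diff_distrib)
  qed
  then show ?thesis
    by (simp add: matrix_eq)
qed

lemma ex_idempotent_factorization_iff:
  fixes A B E F :: "complex^'n^'n"
  assumes "idempotent_mat E" and "idempotent_mat F"
  shows "(\<exists>P Q. idempotent_mat P \<and> idempotent_mat Q \<and>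
            mrange P = mrange E \<and> mnull P = mnull E \<and>
            mrange Q = mrange F \<and> mnull Q = mnull F \<and>
            A = P ** B \<and> A = B ** Q)
         \<longleftrightarrow> A = E ** B \<and> A = B ** F"
  (is "?factorization \<longleftrightarrow> _")
proof
  assume ?factorization
  then obtain P Q where "idempotent_mat P" "mrange P = mrange E" "mnull P = mnull E"
    and "idempotent_mat Q" "mrange Q = mrange F" "mnull Q = mnull F"
    and "A = P ** B" "A = B ** Q"
    by blast
  then show "A = E ** B \<and> A = B ** F"
    using assms idempotent_mat_eqI by metis
next
  assume "A = E ** B \<and> A = B ** F"
  then show ?factorization
    using assms by blast
qed

lemma inner_inverses_projector_conditions_iff:
  fixes A B G M :: "complex^'n^'n"
  assumes G: "A ** G ** A = A" and M: "A ** M ** A = A"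
  shows "(\<exists>P Q. idempotent_mat P \<and> idempotent_mat Q \<and>
            mrange P = mrange A \<and> mnull P = mnull (A ** M) \<and>
            mrange Q = mrange (G ** A) \<and> mnull Q = mnull A \<and>
            A = P ** B \<and> A = B ** Q)
         \<longleftrightarrow> A = A ** M ** B \<and> A = B ** G ** A"
proof -
  have "idempotent_mat (A ** M)" and "idempotent_mat (G ** A)"
    unfolding idempotent_mat_def
    by (fact inner_inverse_idempotent_left[OF M] inner_inverse_idempotent_right[OF G])+
  from ex_idempotent_factorization_iff[OF this, of A B] show ?thesis
    by (simp add: mrange_mult_inner_inverse[OF M] mnull_inner_inverse_mult[OF G] matrix_mul_assoc)
qed

theorem theorem2p15:
  fixes A B :: "complex^'n^'n"
  defines "c1 \<equiv> gd1_le A B"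
    and "c2 \<equiv> (\<exists>M \<in> inv1 A. \<exists>G \<in> GDinv A. A = A ** M ** B \<and> A = B ** G ** A)"
    and "c3 \<equiv> (\<exists>X \<in> GD1inv A. A = A ** X ** B \<and> A = B ** X ** A)"
    and "c4 \<equiv> (\<exists>M \<in> inv1 A. \<exists>G \<in> GDinv A. \<exists>P Q.
              idempotent_mat P \<and> idempotent_mat Q \<and>
              mrange P = mrange A \<and> mnull P = mnull (A ** M) \<and>
              mrange Q = mrange (G ** A) \<and> mnull Q = mnull A \<and>
              A = P ** B \<and> A = B ** Q)"
    and "c5 \<equiv> (\<exists>X \<in> GD1inv A. \<exists>P Q.
              idempotent_mat P \<and> idempotent_mat Q \<and>
              mrange P = mrange A \<and> mnull P = mnull X \<and>
              mrange Q = mrange X \<and> mnull Q = mnull A \<and>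
              A = P ** B \<and> A = B ** Q)"
  shows "(c1 \<longleftrightarrow> c2) \<and> (c1 \<longleftrightarrow> c3) \<and> (c1 \<longleftrightarrow> c4) \<and> (c1 \<longleftrightarrow> c5)"
proof -
  have G: "A ** G ** A = A" if "G \<in> GDinv A" for G
    using that GDinv_subset_inv1 by (auto simp: inv1_def)
  have M: "A ** M ** A = A" if "M \<in> inv1 A" for M
    using that by (simp add: inv1_def)
  have "c1 \<longleftrightarrow> c2"
    unfolding c1_def c2_def gd1_le_def bex_GD1inv_iff
    using G M by (simp add: inner_inverses_commute_iff cong: bex_cong)
  moreover have "c3 \<longleftrightarrow> c2"
    unfolding c3_def c2_def bex_GD1inv_iff
    using G M by (simp add: inner_inverses_sandwich_iff cong: bex_cong)
  moreover have "c4 \<longleftrightarrow> c2"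
    unfolding c4_def c2_def
    using inner_inverses_projector_conditions_iff[OF G M] by (intro bex_cong refl) blast
  moreover have "c5 \<longleftrightarrow> c4"
    unfolding c5_def c4_def bex_GD1inv_iff
    using G M
    by (simp add: mnull_mult_left_cancel mnull_inner_inverse_mult
        mrange_mult_right_cancel mrange_mult_inner_inverse cong: bex_cong)
  ultimately show ?thesis
    by blast
qed

end
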